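(* If $f(x_1,\ldots,x_n)$ is a Chow function, then every restriction of $f$ (obtained by fixing some of its variables to constants) is a Chow function.
   Context: The Chow parameters of a Boolean function $f(x_1,\ldots,x_n)$ are $(w_1(f),\ldots,w_n(f),w(f))$, where $w(f)$ is the number of true points and $w_i(f)$ the number of true points with $x_i=1$. $f$ is a Chow function if no other Boolean function of the same variables has the same Chow parameters. A restriction of $f$ is a function $f_{|x_{i_1}=\alpha_1,\ldots,x_{i_k}=\alpha_k}$ of the remaining variables obtained by fixing $x_{i_j}=\alpha_j\in\{0,1\}$. *)

theory Defs
  imports Main
begin

text \<open>A Boolean function of the variables in a finite set V is modelled as a predicate
  f on assignments; only its values on the points of V (assignments that are False
  outside V) matter.\<close>

definition points :: "'v set \<Rightarrow> ('v \<Rightarrow> bool) set" where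
  "points V = {x. \<forall>v. v \<notin> V \<longrightarrow> \<not> x v}"

definition true_points :: "'v set \<Rightarrow> (('v \<Rightarrow> bool) \<Rightarrow> bool) \<Rightarrow> ('v \<Rightarrow> bool) set" where
  "true_points V f = {x \<in> points V. f x}"

definition chow_w :: "'v set \<Rightarrow> (('v \<Rightarrow> bool) \<Rightarrow> bool) \<Rightarrow> nat" where
  "chow_w V f = card (true_points V f)"

definition chow_wi :: "'v set \<Rightarrow> (('v \<Rightarrow> bool) \<Rightarrow> bool) \<Rightarrow> 'v \<Rightarrow> nat" where
  "chow_wi V f i = card {x \<in> true_points V f. x i}"

definition same_chow :: "'v set \<Rightarrow> (('v \<Rightarrow> bool) \<Rightarrow> bool) \<Rightarrow> (('v \<Rightarrow> bool) \<Rightarrow> bool) \<Rightarrow> bool" where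
  "same_chow V f g \<longleftrightarrow> chow_w V f = chow_w V g \<and> (\<forall>i\<in>V. chow_wi V f i = chow_wi V g i)"

definition same_fun :: "'v set \<Rightarrow> (('v \<Rightarrow> bool) \<Rightarrow> bool) \<Rightarrow> (('v \<Rightarrow> bool) \<Rightarrow> bool) \<Rightarrow> bool" where
  "same_fun V f g \<longleftrightarrow> (\<forall>x\<in>points V. f x = g x)"

definition is_chow :: "'v set \<Rightarrow> (('v \<Rightarrow> bool) \<Rightarrow> bool) \<Rightarrow> bool" where
  "is_chow V f \<longleftrightarrow> (\<forall>g. same_chow V f g \<longrightarrow> same_fun V f g)"

definition restrict_fun :: "'v set \<Rightarrow> ('v \<Rightarrow> bool) \<Rightarrow> (('v \<Rightarrow> bool) \<Rightarrow> bool) \<Rightarrow> (('v \<Rightarrow> bool) \<Rightarrow> bool)" where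
  "restrict_fun S alpha f = (\<lambda>x. f (\<lambda>v. if v \<in> S then alpha v else x v))"

end

theory Submission
  imports Defs
begin

text \<open>Let f' be the restriction of f fixing the variables in S to alpha, and let g' have
  the same Chow parameters as f'. Replace f by g' on the subcube where the variables of S
  equal alpha, keeping f elsewhere. The subcube is a copy of the cube of the remaining
  variables, so every Chow parameter of the patched function g agrees with that of f:
  off the subcube nothing changed, and on it the counts are Chow parameters of f' and g'
  (w_i for a free variable i, and w or 0 for a fixed one). Since f is Chow, g = f, hence
  g' = f'.\<close>

definition cube_embed :: "'v set \<Rightarrow> ('v \<Rightarrow> bool) \<Rightarrow> ('v \<Rightarrow> bool) \<Rightarrow> ('v \<Rightarrow> bool)" where
  "cube_embed S alpha y = (\<lambda>v. if v \<in> S then alpha v else y v)"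

definition patch_fun ::
  "'v set \<Rightarrow> ('v \<Rightarrow> bool) \<Rightarrow> (('v \<Rightarrow> bool) \<Rightarrow> bool) \<Rightarrow> (('v \<Rightarrow> bool) \<Rightarrow> bool) \<Rightarrow> (('v \<Rightarrow> bool) \<Rightarrow> bool)"
where
  "patch_fun S alpha h f x = (if \<forall>v\<in>S. x v = alpha v then h (\<lambda>v. v \<notin> S \<and> x v) else f x)"

lemma restrict_fun_eq: "restrict_fun S alpha f y = f (cube_embed S alpha y)"
  by (simp add: restrict_fun_def cube_embed_def)

lemma finite_points: "finite V \<Longrightarrow> finite (points V)"
proof -
  assume "finite V"
  have "points V \<subseteq> (\<lambda>A v. v \<in> A) ` Pow V"
  proof
    fix x assume "x \<in> points V"
    hence "x = (\<lambda>v. v \<in> {v\<in>V. x v})" "{v\<in>V. x v} \<in> Pow V"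
      by (auto simp: points_def)
    thus "x \<in> (\<lambda>A v. v \<in> A) ` Pow V" by blast
  qed
  thus ?thesis using \<open>finite V\<close> by (meson finite_Pow_iff finite_imageI finite_subset)
qed

lemma cube_embed_in_points:
  "S \<subseteq> V \<Longrightarrow> y \<in> points (V - S) \<Longrightarrow> cube_embed S alpha y \<in> points V"
  by (auto simp: points_def cube_embed_def)

lemma inj_on_cube_embed: "inj_on (cube_embed S alpha) (points (V - S))"
proof (rule inj_onI)
  fix x y assume x: "x \<in> points (V - S)" and y: "y \<in> points (V - S)"
    and eq: "cube_embed S alpha x = cube_embed S alpha y"
  show "x = y"
  proof
    fix v
    show "x v = y v"
      using x y fun_cong[OF eq, of v] by (cases "v \<in> S") (auto simp: points_def cube_embed_def)
  qed
qed

lemma patch_fun_cube_embed: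
  "y \<in> points (V - S) \<Longrightarrow> patch_fun S alpha h f (cube_embed S alpha y) = h y"
proof -
  assume "y \<in> points (V - S)"
  hence "(\<lambda>v. v \<notin> S \<and> cube_embed S alpha y v) = y"
    by (auto simp: points_def cube_embed_def)
  thus ?thesis by (simp add: patch_fun_def cube_embed_def)
qed

lemma card_subcube:
  assumes "S \<subseteq> V"
  shows "card {x \<in> points V. (\<forall>v\<in>S. x v = alpha v) \<and> Q x}
       = card {y \<in> points (V - S). Q (cube_embed S alpha y)}"
proof -
  have "{x \<in> points V. (\<forall>v\<in>S. x v = alpha v) \<and> Q x}
      = cube_embed S alpha ` {y \<in> points (V - S). Q (cube_embed S alpha y)}"
  proof (intro equalityI subsetI)
    fix x assume x: "x \<in> {x \<in> points V. (\<forall>v\<in>S. x v = alpha v) \<and> Q x}"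
    hence "x = cube_embed S alpha (\<lambda>v. v \<notin> S \<and> x v)"
      by (auto simp: cube_embed_def)
    moreover have "(\<lambda>v. v \<notin> S \<and> x v) \<in> points (V - S)"
      using x by (auto simp: points_def)
    ultimately show "x \<in> cube_embed S alpha ` {y \<in> points (V - S). Q (cube_embed S alpha y)}"
      using x by auto
  next
    fix x assume "x \<in> cube_embed S alpha ` {y \<in> points (V - S). Q (cube_embed S alpha y)}"
    then obtain y where "y \<in> points (V - S)" "Q (cube_embed S alpha y)" "x = cube_embed S alpha y"
      by blast
    thus "x \<in> {x \<in> points V. (\<forall>v\<in>S. x v = alpha v) \<and> Q x}"
      using cube_embed_in_points[OF assms] by (auto simp: cube_embed_def)
  qed
  moreover have "inj_on (cube_embed S alpha) {y \<in> points (V - S). Q (cube_embed S alpha y)}"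
    by (rule inj_on_subset[OF inj_on_cube_embed]) blast
  ultimately show ?thesis by (simp add: card_image)
qed

lemma card_true_patch_fun:
  assumes "finite V" and "S \<subseteq> V"
    and "card {y \<in> points (V - S). restrict_fun S alpha f y \<and> P (cube_embed S alpha y)}
       = card {y \<in> points (V - S). h y \<and> P (cube_embed S alpha y)}"
  shows "card {x \<in> points V. f x \<and> P x} = card {x \<in> points V. patch_fun S alpha h f x \<and> P x}"
proof -
  let ?A = "\<lambda>x. \<forall>v\<in>S. x v = alpha v"
  have split: "card {x \<in> points V. F x} = card {x \<in> points V. ?A x \<and> F x}
                                          + card {x \<in> points V. \<not> ?A x \<and> F x}" for F
  proof -
    have "{x \<in> points V. F x} = {x \<in> points V. ?A x \<and> F x} \<union> {x \<in> points V. \<not> ?A x \<and> F x}"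
      by auto
    thus ?thesis using finite_points[OF assms(1)] by (simp add: card_Un_disjoint disjoint_iff)
  qed
  have "card {x \<in> points V. ?A x \<and> f x \<and> P x}
      = card {y \<in> points (V - S). restrict_fun S alpha f y \<and> P (cube_embed S alpha y)}"
    by (simp add: card_subcube[OF assms(2)] restrict_fun_eq)
  also have "\<dots> = card {y \<in> points (V - S). patch_fun S alpha h f (cube_embed S alpha y)
                                             \<and> P (cube_embed S alpha y)}"
    using assms(3) by (simp add: patch_fun_cube_embed cong: conj_cong)
  also have "\<dots> = card {x \<in> points V. ?A x \<and> patch_fun S alpha h f x \<and> P x}"
    by (simp add: card_subcube[OF assms(2)])
  finally have on_subcube: "card {x \<in> points V. ?A x \<and> f x \<and> P x}
                          = card {x \<in> points V. ?A x \<and> patch_fun S alpha h f x \<and> P x}" .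
  have off_subcube: "{x \<in> points V. \<not> ?A x \<and> f x \<and> P x}
                   = {x \<in> points V. \<not> ?A x \<and> patch_fun S alpha h f x \<and> P x}"
    by (auto simp: patch_fun_def)
  show ?thesis
    using split[of "\<lambda>x. f x \<and> P x"] split[of "\<lambda>x. patch_fun S alpha h f x \<and> P x"]
      on_subcube off_subcube by simp
qed

lemma same_chow_patch_fun:
  assumes "finite V" and "S \<subseteq> V" and "same_chow (V - S) (restrict_fun S alpha f) h"
  shows "same_chow V f (patch_fun S alpha h f)"
proof -
  let ?f' = "restrict_fun S alpha f" and ?g = "patch_fun S alpha h f"
  have w: "chow_w (V - S) ?f' = chow_w (V - S) h"
    and wi: "\<And>i. i \<in> V - S \<Longrightarrow> chow_wi (V - S) ?f' i = chow_wi (V - S) h i"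
    using assms(3) by (auto simp: same_chow_def)
  have "card {x \<in> points V. f x \<and> True} = card {x \<in> points V. ?g x \<and> True}"
    using w by (intro card_true_patch_fun[OF assms(1,2)]) (simp add: chow_w_def true_points_def)
  moreover have "card {x \<in> points V. f x \<and> x i} = card {x \<in> points V. ?g x \<and> x i}"
    if i: "i \<in> V" for i
  proof (rule card_true_patch_fun[OF assms(1,2)])
    show "card {y \<in> points (V - S). ?f' y \<and> cube_embed S alpha y i}
        = card {y \<in> points (V - S). h y \<and> cube_embed S alpha y i}"
    proof (cases "i \<in> S")
      case True
      then show ?thesis
        using w by (cases "alpha i") (simp_all add: cube_embed_def chow_w_def true_points_def)
    next
      case False
      then show ?thesis
        using wi[of i] i by (simp add: cube_embed_def chow_wi_def true_points_def)
    qed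
  qed
  moreover have "true_points V F = {x \<in> points V. F x \<and> True}"
    and "{x \<in> true_points V F. x i} = {x \<in> points V. F x \<and> x i}" for F i
    by (auto simp: true_points_def)
  ultimately show ?thesis
    by (simp add: same_chow_def chow_w_def chow_wi_def)
qed

lemma same_fun_restrict_fun:
  assumes "S \<subseteq> V" and "same_fun V f g"
  shows "same_fun (V - S) (restrict_fun S alpha f) (restrict_fun S alpha g)"
  using assms by (simp add: same_fun_def restrict_fun_eq cube_embed_in_points)

lemma same_fun_restrict_patch_fun:
  "same_fun (V - S) (restrict_fun S alpha (patch_fun S alpha h f)) h"
  by (simp add: same_fun_def restrict_fun_eq patch_fun_cube_embed)

theorem mainTheorem13:
  fixes V S :: "'v set" and alpha :: "'v \<Rightarrow> bool" and f :: "('v \<Rightarrow> bool) \<Rightarrow> bool"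
  assumes "finite V" and "S \<subseteq> V" and "is_chow V f"
  shows "is_chow (V - S) (restrict_fun S alpha f)"
  unfolding is_chow_def
proof (intro allI impI)
  fix h assume "same_chow (V - S) (restrict_fun S alpha f) h"
  hence "same_chow V f (patch_fun S alpha h f)"
    by (rule same_chow_patch_fun[OF assms(1,2)])
  hence "same_fun V f (patch_fun S alpha h f)"
    using assms(3) by (simp add: is_chow_def)
  hence "same_fun (V - S) (restrict_fun S alpha f) (restrict_fun S alpha (patch_fun S alpha h f))"
    by (rule same_fun_restrict_fun[OF assms(2)])
  with same_fun_restrict_patch_fun show "same_fun (V - S) (restrict_fun S alpha f) h"
    by (simp add: same_fun_def)
qed

end
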